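(* For every integer $k\geq 1$ and every integer $n\geq 0$, in $\mathbb{Q}(t)$, $$\sum_{i=k2^{n}}^{k2^{n+1}}\frac{1}{B_i(t)B_{i+1}(t)}=\frac{(2-t)\,S_k(t)}{t^{\,n+\lfloor\log_2 k\rfloor+1}B_k(t)}+\frac{1}{t^{\,n+1}B_k(t)}\left(\frac{1}{B_{k2^{n+1}+1}(t)}+1\right),$$ where the sum runs over all integers $i$ with $k2^n\leq i\leq k2^{n+1}$.
   Context: The Stern polynomials $B_n(t)\in\mathbb{Z}[t]$ are defined by $B_0(t)=0$, $B_1(t)=1$, and for $n\geq 1$: $B_{2n}(t)=tB_n(t)$, $B_{2n+1}(t)=B_n(t)+B_{n+1}(t)$. The polynomials $S_n(t)$, $n\ge1$, are defined by $S_1(t)=S_2(t)=0$ and, for $k\geq 1$, $S_{2k}(t)=tS_k(t)$, $S_{2k+1}(t)=S_k(t)+S_{k+1}(t)+t^{\lfloor\log_2 k\rfloor}$. *)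

theory Defs
  imports Complex_Main "HOL-Computational_Algebra.Polynomial" "HOL-Computational_Algebra.Polynomial_Factorial"
begin

text \<open>Stern polynomials B_n(t) in Z[t], realised in Q[t] (Z[t] embeds in Q[t]).\<close>
function stern_B :: "nat \<Rightarrow> rat poly" where
  "stern_B n =
     (if n = 0 then 0
      else if n = 1 then 1
      else if even n then [:0, 1:] * stern_B (n div 2)
      else stern_B (n div 2) + stern_B (n div 2 + 1))"
  by pat_completeness auto
termination by (relation "measure id") (auto elim!: oddE)

text \<open>The polynomials S_n(t), n >= 1; the value at 0 is irrelevant (set to 0).\<close>
function stern_S :: "nat \<Rightarrow> rat poly" where
  "stern_S n =
     (if n \<le> 2 then 0
      else if even n then [:0, 1:] * stern_S (n div 2)
      else stern_S (n div 2) + stern_S (n div 2 + 1)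
             + [:0, 1:] ^ nat \<lfloor>log 2 (real (n div 2))\<rfloor>)"
  by pat_completeness auto
termination by (relation "measure id") (auto elim!: oddE)

text \<open>Q[t] is embedded into its fraction field Q(t) via to_fract.\<close>

end

theory Submission
  imports Defs "HOL-Library.Discrete_Functions"
begin

(* Write  T(a,b) = sum_{a <= i < b} 1/(B_i B_{i+1})  in Q(t) and consider the
   "block" T(k,2k) weighted by  W(k) = t B_k T(k,2k).
   (1) Since B_{2j} = t B_j and B_{2j+1} = B_j + B_{j+1}, two consecutive summands of the
       doubled range collapse into one:  1/(B_{2j}B_{2j+1}) + 1/(B_{2j+1}B_{2j+2}) = 1/(t B_j B_{j+1}).
       Hence T(2a,2b) = T(a,b)/t, and T(2^n a, 2^n b) = T(a,b)/t^n.
   (2) Consequently W(2m) = W(m), and, comparing T(2m+1,4m+2) with T(m,2m) and with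
       T(m+1,2m+2), one gets  t W(2m+1) = W(m) + W(m+1).
   (3) These are the recurrences satisfied by  (2-t) S_k / t^{floor(log2 k)} + 1, so by strong
       induction W(k) equals that expression.  (At the jump of floor(log2) the term S_{m+1}
       vanishes, because S is zero at powers of two.)
   (4) The theorem splits off the last summand of the range [k 2^n, k 2^{n+1}] and applies
       (1) with scale 2^n together with (3). *)

declare stern_B.simps[simp del] stern_S.simps[simp del]

lemma stern_B_0_1 [simp]: "stern_B 0 = 0" "stern_B (Suc 0) = 1"
  by (simp_all add: stern_B.simps)

lemma stern_B_even: "stern_B (2 * n) = [:0, 1:] * stern_B n"
  by (subst stern_B.simps) auto

lemma stern_B_odd: "stern_B (2 * n + 1) = stern_B n + stern_B (n + 1)"
  by (subst stern_B.simps) auto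

lemma stern_S_even: "m \<ge> 1 \<Longrightarrow> stern_S (2 * m) = [:0, 1:] * stern_S m"
  by (cases "m = 1") (simp_all add: stern_S.simps)

lemma stern_S_odd:
  "m \<ge> 1 \<Longrightarrow> stern_S (2 * m + 1) = stern_S m + stern_S (m + 1) + [:0, 1:] ^ floor_log m"
  by (subst stern_S.simps) (auto simp: floor_log_altdef)

text \<open>S vanishes at powers of two; this absorbs the jumps of the floor-logarithm.\<close>
lemma stern_S_power_of_two: "stern_S (2 ^ j) = 0"
proof (induction j)
  case 0
  then show ?case by (simp add: stern_S.simps)
next
  case (Suc j)
  have "stern_S (2 ^ Suc j) = [:0, 1:] * stern_S (2 ^ j)"
    using stern_S_even[of "2 ^ j"] by simp
  with Suc show ?case by simp
qed

lemma positive_parity_cases: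
  fixes n :: nat
  assumes "n \<ge> 1"
  obtains "n = 1" | m where "n = 2 * m" "m \<ge> 1" | m where "n = 2 * m + 1" "m \<ge> 1"
proof (cases "even n")
  case True
  then obtain m where "n = 2 * m" by blast
  with assms show ?thesis using that(2) by simp
next
  case False
  then obtain m where "n = 2 * m + 1" by (blast elim: oddE)
  then show ?thesis using that(1,3) by (cases "m = 0") auto
qed

text \<open>B_n(1) is the Stern diatomic sequence, which is positive for n \<ge> 1;
  in particular B_n is a nonzero polynomial, so all the fractions below make sense.\<close>
lemma stern_B_at_one: "n \<ge> 1 \<Longrightarrow> poly (stern_B n) 1 \<ge> 1"
proof (induction n rule: less_induct)
  case (less n)
  from less.prems show ?case
  proof (cases rule: positive_parity_cases)
    case (2 m)
    then show ?thesis using less.IH[of m] by (simp add: stern_B_even)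
  next
    case (3 m)
    then show ?thesis using less.IH[of m] less.IH[of "m + 1"] unfolding 3(1) stern_B_odd by simp
  qed simp
qed

lemma stern_B_nonzero: "n \<ge> 1 \<Longrightarrow> to_fract (stern_B n) \<noteq> 0"
  using stern_B_at_one[of n] by auto

abbreviation X :: "rat poly fract" where "X \<equiv> to_fract [:0, 1:]"
abbreviation Bq :: "nat \<Rightarrow> rat poly fract" where "Bq i \<equiv> to_fract (stern_B i)"
abbreviation Sq :: "nat \<Rightarrow> rat poly fract" where "Sq i \<equiv> to_fract (stern_S i)"

lemma to_fract_power: "to_fract (p ^ n) = to_fract p ^ n"
  by (induction n) simp_all

lemma X_nonzero: "X \<noteq> 0"
  by simp

lemma Bq_even: "Bq (2 * n) = X * Bq n"
  by (simp only: stern_B_even to_fract_mult)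

lemma Bq_odd: "Bq (2 * n + 1) = Bq n + Bq (n + 1)"
  by (simp only: stern_B_odd to_fract_add)

lemma Bq_power_of_two: "Bq (2 ^ j * k) = X ^ j * Bq k"
  by (induction j) (simp_all add: mult.assoc Bq_even)

definition stern_sum :: "nat \<Rightarrow> nat \<Rightarrow> rat poly fract" where
  "stern_sum a b = (\<Sum>i\<in>{a..<b}. 1 / (Bq i * Bq (i + 1)))"

lemma stern_sum_snoc: "a \<le> b \<Longrightarrow> stern_sum a (Suc b) = stern_sum a b + 1 / (Bq b * Bq (b + 1))"
  by (simp add: stern_sum_def)

lemma stern_sum_cons: "a < b \<Longrightarrow> stern_sum a b = 1 / (Bq a * Bq (a + 1)) + stern_sum (Suc a) b"
  by (simp add: stern_sum_def sum.atLeast_Suc_lessThan)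

lemma stern_pair:
  assumes "j \<ge> 1"
  shows "1 / (Bq (2 * j) * Bq (2 * j + 1)) + 1 / (Bq (2 * j + 1) * Bq (2 * j + 2))
         = 1 / (X * Bq j * Bq (j + 1))"
proof -
  have collapse: "1 / (x * a * (a + c)) + 1 / ((a + c) * (x * c)) = 1 / (x * a * c)"
    \<comment> \<open>partial fractions, with a = B_j, c = B_{j+1}, x = t\<close>
    if "x \<noteq> 0" "a \<noteq> 0" "c \<noteq> 0" "a + c \<noteq> 0" for x a c :: "rat poly fract"
    using that by (simp add: divide_simps)
  have "Bq j \<noteq> 0" "Bq (j + 1) \<noteq> 0" "Bq j + Bq (j + 1) \<noteq> 0"
    using assms stern_B_nonzero[of j] stern_B_nonzero[of "j + 1"]
      stern_B_nonzero[of "2 * j + 1"] Bq_odd[of j] by auto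
  moreover have "Bq (2 * j + 2) = X * Bq (j + 1)"
    using Bq_even[of "j + 1"] by simp
  ultimately show ?thesis
    unfolding Bq_even Bq_odd using collapse[OF X_nonzero] by simp
qed

text \<open>Pairing up the summands halves the range at the cost of a factor 1/t.\<close>
lemma stern_sum_double:
  assumes "a \<ge> 1" "a \<le> b"
  shows "stern_sum (2 * a) (2 * b) = stern_sum a b / X"
  using assms(2)
proof (induction b rule: dec_induct)
  case base
  then show ?case by (simp add: stern_sum_def)
next
  case (step b)
  have "stern_sum (2 * a) (2 * Suc b)
      = stern_sum (2 * a) (2 * b)
        + (1 / (Bq (2 * b) * Bq (2 * b + 1)) + 1 / (Bq (2 * b + 1) * Bq (2 * b + 2)))"
    using step.hyps by (simp add: stern_sum_def sum.atLeastLessThan_Suc add.assoc)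
  also have "\<dots> = stern_sum a b / X + 1 / (X * Bq b * Bq (b + 1))"
    using step.IH stern_pair[of b] step.hyps assms by simp
  also have "\<dots> = stern_sum a (Suc b) / X"
    using step.hyps by (simp add: stern_sum_snoc add_divide_distrib)
  finally show ?case .
qed

lemma stern_sum_scale:
  assumes "a \<ge> 1" "a \<le> b"
  shows "stern_sum (2 ^ n * a) (2 ^ n * b) = stern_sum a b / X ^ n"
proof (induction n)
  case (Suc n)
  have "stern_sum (2 ^ Suc n * a) (2 ^ Suc n * b) = stern_sum (2 * (2 ^ n * a)) (2 * (2 ^ n * b))"
    by (simp add: mult.assoc)
  also have "\<dots> = stern_sum (2 ^ n * a) (2 ^ n * b) / X"
    by (rule stern_sum_double) (use assms in auto)
  finally show ?case using Suc by simp
qed simp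

definition block_weight :: "nat \<Rightarrow> rat poly fract" where
  "block_weight k = X * Bq k * stern_sum k (2 * k)"

lemma block_weight_even:
  assumes "m \<ge> 1"
  shows "block_weight (2 * m) = block_weight m"
proof -
  have "block_weight (2 * m) = X * (X * Bq m) * (stern_sum m (2 * m) / X)"
    unfolding block_weight_def Bq_even using stern_sum_double[of m "2 * m"] assms
    by (simp add: mult.assoc)
  then show ?thesis
    using X_nonzero by (simp add: block_weight_def)
qed

text \<open>The odd block T(2m+1,4m+2), compared with the block of m (dropping its first term) \<dots>\<close>
lemma odd_block_from_left:
  assumes "m \<ge> 1"
  shows "stern_sum (2 * m + 1) (4 * m + 2)
         = stern_sum m (2 * m) / X + (1 - X) / (X * X * Bq m * Bq (2 * m + 1))"
proof -
  define c where "c = 1 / (Bq (2 * m) * Bq (2 * m + 1))"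
  have "stern_sum (2 * m) (2 * (2 * m + 1)) = stern_sum m (2 * m + 1) / X"
    using stern_sum_double[of m "2 * m + 1"] assms by simp
  then have "c + stern_sum (2 * m + 1) (4 * m + 2) = (stern_sum m (2 * m) + c) / X"
    using stern_sum_cons[of "2 * m" "4 * m + 2"] stern_sum_snoc[of m "2 * m"]
    by (simp add: c_def algebra_simps)
  then have "stern_sum (2 * m + 1) (4 * m + 2) = (stern_sum m (2 * m) + c) / X - c"
    by (simp add: eq_diff_eq add.commute)
  also have "\<dots> = stern_sum m (2 * m) / X + (1 - X) * c / X"
    using X_nonzero by (simp add: field_simps)
  also have "(1 - X) * c / X = (1 - X) / (X * X * Bq m * Bq (2 * m + 1))"
    by (simp add: c_def Bq_even)
  finally show ?thesis .
qed

text \<open>\<dots> and with the block of m+1 (dropping its last term).\<close>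
lemma odd_block_from_right:
  assumes "m \<ge> 1"
  shows "stern_sum (2 * m + 1) (4 * m + 2)
         = stern_sum (m + 1) (2 * m + 2) / X - (1 - X) / (X * X * Bq (m + 1) * Bq (2 * m + 1))"
proof -
  define c where "c = 1 / (Bq (2 * m + 1) * Bq (2 * m + 2))"
  have "stern_sum (2 * (m + 1)) (2 * (2 * m + 1)) = stern_sum (m + 1) (2 * m + 1) / X"
    using stern_sum_double[of "m + 1" "2 * m + 1"] assms by simp
  then have "stern_sum (2 * m + 1) (4 * m + 2) = c + (stern_sum (m + 1) (2 * m + 2) - c) / X"
    using stern_sum_cons[of "2 * m + 1" "4 * m + 2"] stern_sum_snoc[of "m + 1" "2 * m + 1"]
    by (simp add: c_def algebra_simps)
  also have "\<dots> = stern_sum (m + 1) (2 * m + 2) / X - (1 - X) * c / X"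
    using X_nonzero by (simp add: field_simps)
  also have "(1 - X) * c / X = (1 - X) / (X * X * Bq (m + 1) * Bq (2 * m + 1))"
    using Bq_even[of "m + 1"] by (simp add: c_def mult_ac)
  finally show ?thesis .
qed

text \<open>Weighting the two expressions by B_m and B_{m+1} cancels the correction terms.\<close>
lemma block_weight_odd:
  assumes "m \<ge> 1"
  shows "X * block_weight (2 * m + 1) = block_weight m + block_weight (m + 1)"
proof -
  let ?T = "stern_sum (2 * m + 1) (4 * m + 2)"
  have "Bq m \<noteq> 0" "Bq (m + 1) \<noteq> 0" "Bq (2 * m + 1) \<noteq> 0"
    using assms stern_B_nonzero by auto
  have left: "X * Bq m * ?T = Bq m * stern_sum m (2 * m) + (1 - X) / (X * Bq (2 * m + 1))"
    unfolding odd_block_from_left[OF assms]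
    using \<open>Bq m \<noteq> 0\<close> \<open>Bq (2 * m + 1) \<noteq> 0\<close> X_nonzero by (simp add: field_simps)
  have right: "X * Bq (m + 1) * ?T
      = Bq (m + 1) * stern_sum (m + 1) (2 * m + 2) - (1 - X) / (X * Bq (2 * m + 1))"
    unfolding odd_block_from_right[OF assms]
    using \<open>Bq (m + 1) \<noteq> 0\<close> \<open>Bq (2 * m + 1) \<noteq> 0\<close> X_nonzero by (simp add: field_simps)
  have "X * Bq (2 * m + 1) * ?T = X * Bq m * ?T + X * Bq (m + 1) * ?T"
    unfolding Bq_odd by (simp add: algebra_simps)
  also have "\<dots> = Bq m * stern_sum m (2 * m) + Bq (m + 1) * stern_sum (m + 1) (2 * m + 2)"
    unfolding left right by simp
  finally show ?thesis
    by (simp add: block_weight_def algebra_simps)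
qed

lemma floor_log_Suc_jump:
  assumes "floor_log (m + 1) \<noteq> floor_log m"
  shows "m + 1 = 2 ^ floor_log (m + 1)"
proof -
  have "floor_log m < floor_log (m + 1)"
    using assms floor_log_le_iff[of m "m + 1"] by simp
  then have "2 * 2 ^ floor_log m \<le> (2::nat) ^ floor_log (m + 1)"
    by (metis Suc_leI power_Suc power_increasing_iff one_less_numeral_iff semiring_norm(76))
  then have "m < 2 ^ floor_log (m + 1)"
    using floor_log_exp2_gt[of m] by linarith
  moreover have "2 ^ floor_log (m + 1) \<le> m + 1"
    by (rule floor_log_exp2_le) simp
  ultimately show ?thesis by simp
qed

text \<open>The key identity  t B_k T(k,2k) = (2-t) S_k / t^{floor(log2 k)} + 1, by strong induction:
  both sides satisfy the recurrences of block_weight_even and block_weight_odd.\<close>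
lemma block_weight_closed_form:
  "k \<ge> 1 \<Longrightarrow> block_weight k = (2 - X) * Sq k / X ^ floor_log k + 1"
proof (induction k rule: less_induct)
  case (less k)
  from less.prems show ?case
  proof (cases rule: positive_parity_cases)
    case 1
    then show ?thesis
      by (simp add: block_weight_def stern_sum_def stern_S.simps stern_B.simps numeral_2_eq_2)
  next
    case (2 m)
    have "Sq k = X * Sq m"
      by (simp only: 2 stern_S_even[OF \<open>m \<ge> 1\<close>] to_fract_mult)
    then show ?thesis
      using 2 less.IH[of m] block_weight_even[of m] X_nonzero by simp
  next
    case (3 m)
    have IH_m: "block_weight m = (2 - X) * Sq m / X ^ floor_log m + 1"
      using less.IH 3 by simp
    have "Sq (m + 1) / X ^ floor_log (m + 1) = Sq (m + 1) / X ^ floor_log m"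
    proof (cases "floor_log (m + 1) = floor_log m")
      case False
      then have "m + 1 = 2 ^ floor_log (m + 1)"
        by (rule floor_log_Suc_jump)
      then have "stern_S (m + 1) = 0"
        by (metis stern_S_power_of_two)
      then show ?thesis by simp
    qed simp
    then have IH_m1: "block_weight (m + 1) = (2 - X) * Sq (m + 1) / X ^ floor_log m + 1"
      using less.IH[of "m + 1"] 3
      by (simp add: times_divide_eq_right[symmetric] del: times_divide_eq_right)
    have Sq_k: "Sq k = Sq m + Sq (m + 1) + X ^ floor_log m"
      using 3 stern_S_odd[OF \<open>m \<ge> 1\<close>] by (simp add: to_fract_add to_fract_power)
    have log_k: "floor_log k = Suc (floor_log m)"
      using 3 by (simp add: floor_log_rec)
    have "X * block_weight k = block_weight m + block_weight (m + 1)"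
      using block_weight_odd[OF \<open>m \<ge> 1\<close>] 3 by simp
    also have "\<dots> = (2 - X) * (Sq m + Sq (m + 1) + X ^ floor_log m) / X ^ floor_log m + X"
      unfolding IH_m IH_m1 using X_nonzero by (simp add: field_simps)
    also have "\<dots> = X * ((2 - X) * Sq k / X ^ floor_log k + 1)"
      unfolding Sq_k log_k using X_nonzero by (simp add: field_simps)
    finally have "X * block_weight k = X * ((2 - X) * Sq k / X ^ floor_log k + 1)" .
    then show ?thesis using X_nonzero by simp
  qed
qed

theorem mainTheorem15:
  fixes k n :: nat
  assumes "k \<ge> 1"
  shows "(\<Sum>i\<in>{k * 2 ^ n .. k * 2 ^ (n + 1)}.
            1 / (to_fract (stern_B i) * to_fract (stern_B (i + 1))))
       = ((2 - to_fract [:0, 1:]) * to_fract (stern_S k))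
           / (to_fract [:0, 1:] ^ (n + nat \<lfloor>log 2 (real k)\<rfloor> + 1) * to_fract (stern_B k))
         + 1 / (to_fract [:0, 1:] ^ (n + 1) * to_fract (stern_B k))
           * (1 / to_fract (stern_B (k * 2 ^ (n + 1) + 1)) + 1)"
proof -
  define N where "N = k * 2 ^ (n + 1)"
  have log_k: "nat \<lfloor>log 2 (real k)\<rfloor> = floor_log k"
    using assms by (simp add: floor_log_altdef)
  have B_N: "Bq N = X ^ (n + 1) * Bq k"
    using Bq_power_of_two[of "n + 1" k] by (simp add: N_def mult.commute)
  have "Bq k \<noteq> 0" "Bq (N + 1) \<noteq> 0"
    using stern_B_nonzero assms by auto
  have "{k * 2 ^ n .. N} = insert N {k * 2 ^ n ..< N}"
    by (auto simp: N_def)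
  then have "(\<Sum>i\<in>{k * 2 ^ n .. N}. 1 / (Bq i * Bq (i + 1)))
      = 1 / (Bq N * Bq (N + 1)) + stern_sum (2 ^ n * k) (2 ^ n * (2 * k))"
    by (simp add: stern_sum_def N_def mult_ac)
  also have "\<dots> = 1 / (Bq N * Bq (N + 1)) + block_weight k / (X * Bq k) / X ^ n"
    using stern_sum_scale[of k "2 * k" n] assms \<open>Bq k \<noteq> 0\<close> X_nonzero
    by (simp add: block_weight_def)
  also have "\<dots> = ((2 - X) * Sq k) / (X ^ (n + floor_log k + 1) * Bq k)
         + 1 / (X ^ (n + 1) * Bq k) * (1 / Bq (N + 1) + 1)"
    unfolding block_weight_closed_form[OF assms] B_N
    using \<open>Bq k \<noteq> 0\<close> \<open>Bq (N + 1) \<noteq> 0\<close> X_nonzero by (simp add: field_simps power_add)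
  finally show ?thesis
    unfolding N_def log_k .
qed

end
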